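(* Let $R$ be a semi-local ring containing $\mathbb Q$ and let $m\ge1$. For every $n\ge0$ the map $$\theta^n_{R_m}\colon tR_m\otimes_R\Omega^n_R\to\frac{\widetilde\Omega^n_{R_m}}{d\,\widetilde\Omega^{n-1}_{R_m}},\qquad t^i\otimes\omega\mapsto\text{class of }t^i\omega,$$ is surjective.
   Context: $R_m=R[t]/(t^{m+1})$, $tR_m$ the ideal generated by $t$. $\Omega^n_A$ denotes absolute Kähler differentials ($=\Omega^n_{A/\mathbb Q}$), $\widetilde\Omega^n_{R_m}=\ker(\Omega^n_{R_m}\to\Omega^n_R)$ (induced by $t\mapsto0$), with $\widetilde\Omega^{-1}_{R_m}=0$. *)

theory Defs
  imports "HOL-Algebra.Algebra" "HOL-Library.Poly_Mapping"
begin

definition contains_rationals :: "('a, 'b) ring_scheme \<Rightarrow> bool" where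
  "contains_rationals R \<longleftrightarrow> (\<forall>k::nat. k > 0 \<longrightarrow> ([k] \<cdot>\<^bsub>R\<^esub> \<one>\<^bsub>R\<^esub>) \<in> Units R)"

definition semilocal :: "('a, 'b) ring_scheme \<Rightarrow> bool" where
  "semilocal R \<longleftrightarrow> finite {I. maximalideal I R}"

section \<open>The truncated polynomial ring R_m = R[t]/(t^(m+1))\<close>

definition trunc_ring :: "('a, 'b) ring_scheme \<Rightarrow> nat \<Rightarrow> (nat \<Rightarrow> 'a) ring" where
  "trunc_ring R m =
    \<lparr>partial_object.carrier = {f. (\<forall>i. f i \<in> carrier R) \<and> (\<forall>i. m < i \<longrightarrow> f i = \<zero>\<^bsub>R\<^esub>)},
      monoid.mult = (\<lambda>f g. (\<lambda>k. if k \<le> m then (\<Oplus>\<^bsub>R\<^esub> i\<in>{..k}. f i \<otimes>\<^bsub>R\<^esub> g (k - i)) else \<zero>\<^bsub>R\<^esub>)),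
      monoid.one = (\<lambda>k. if k = 0 then \<one>\<^bsub>R\<^esub> else \<zero>\<^bsub>R\<^esub>),
      ring.zero = (\<lambda>k. \<zero>\<^bsub>R\<^esub>),
      ring.add = (\<lambda>f g. (\<lambda>k. f k \<oplus>\<^bsub>R\<^esub> g k))\<rparr>"

definition trunc_incl :: "('a, 'b) ring_scheme \<Rightarrow> 'a \<Rightarrow> (nat \<Rightarrow> 'a)" where
  "trunc_incl R a = (\<lambda>k. if k = 0 then a else \<zero>\<^bsub>R\<^esub>)"

definition trunc_eval0 :: "(nat \<Rightarrow> 'a) \<Rightarrow> 'a" where
  "trunc_eval0 f = f 0"

definition trunc_tpow :: "('a, 'b) ring_scheme \<Rightarrow> nat \<Rightarrow> (nat \<Rightarrow> 'a)" where
  "trunc_tpow R i = (\<lambda>k. if k = i then \<one>\<^bsub>R\<^esub> else \<zero>\<^bsub>R\<^esub>)"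

text \<open>A formal Z-linear combination of symbols a0 da1 ... dan is a finitely
  supported function from (a0,[a1,...,an]) to int.\<close>
type_synonym 'a kformal = "('a \<times> 'a list) \<Rightarrow>\<^sub>0 int"

definition kgen :: "'a \<Rightarrow> 'a list \<Rightarrow> 'a kformal" where
  "kgen a as = Poly_Mapping.single (a, as) 1"

definition kform :: "('a, 'b) ring_scheme \<Rightarrow> nat \<Rightarrow> 'a kformal set" where
  "kform A n = {x. \<forall>k \<in> Poly_Mapping.keys x.
      fst k \<in> carrier A \<and> set (snd k) \<subseteq> carrier A \<and> length (snd k) = n}"

text \<open>The quotient of the free
  abelian group by this subgroup is the exterior power
  Lambda^n_A Omega^1_{A/Z} = Omega^n_A.\<close>
inductive_set krel :: "('a, 'b) ring_scheme \<Rightarrow> nat \<Rightarrow> 'a kformal set"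
  for A n where
  zero: "0 \<in> krel A n"
| diff: "x \<in> krel A n \<Longrightarrow> y \<in> krel A n \<Longrightarrow> x - y \<in> krel A n"
| add0: "a \<in> carrier A \<Longrightarrow> b \<in> carrier A \<Longrightarrow> set as \<subseteq> carrier A \<Longrightarrow> length as = n \<Longrightarrow>
     kgen (a \<oplus>\<^bsub>A\<^esub> b) as - kgen a as - kgen b as \<in> krel A n"
| addd: "a \<in> carrier A \<Longrightarrow> b \<in> carrier A \<Longrightarrow> c \<in> carrier A \<Longrightarrow>
     set xs \<subseteq> carrier A \<Longrightarrow> set ys \<subseteq> carrier A \<Longrightarrow> length xs + length ys + 1 = n \<Longrightarrow>
     kgen a (xs @ (b \<oplus>\<^bsub>A\<^esub> c) # ys) - kgen a (xs @ b # ys) - kgen a (xs @ c # ys) \<in> krel A n"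
| leibniz: "a \<in> carrier A \<Longrightarrow> b \<in> carrier A \<Longrightarrow> c \<in> carrier A \<Longrightarrow>
     set xs \<subseteq> carrier A \<Longrightarrow> set ys \<subseteq> carrier A \<Longrightarrow> length xs + length ys + 1 = n \<Longrightarrow>
     kgen a (xs @ (b \<otimes>\<^bsub>A\<^esub> c) # ys) - kgen (a \<otimes>\<^bsub>A\<^esub> b) (xs @ c # ys)
       - kgen (a \<otimes>\<^bsub>A\<^esub> c) (xs @ b # ys) \<in> krel A n"
| alt: "a \<in> carrier A \<Longrightarrow> b \<in> carrier A \<Longrightarrow>
     set xs \<subseteq> carrier A \<Longrightarrow> set ys \<subseteq> carrier A \<Longrightarrow> set zs \<subseteq> carrier A \<Longrightarrow>
     length xs + length ys + length zs + 2 = n \<Longrightarrow>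
     kgen a (xs @ b # ys @ b # zs) \<in> krel A n"

definition keq :: "('a, 'b) ring_scheme \<Rightarrow> nat \<Rightarrow> 'a kformal \<Rightarrow> 'a kformal \<Rightarrow> bool" where
  "keq A n x y \<longleftrightarrow> x - y \<in> krel A n"

definition kmap :: "('a \<Rightarrow> 'c) \<Rightarrow> 'a kformal \<Rightarrow> 'c kformal" where
  "kmap f x = (\<Sum>k\<in>Poly_Mapping.keys x.
      Poly_Mapping.single (f (fst k), map f (snd k)) (Poly_Mapping.lookup x k))"

definition kd :: "('a, 'b) ring_scheme \<Rightarrow> 'a kformal \<Rightarrow> 'a kformal" where
  "kd A x = (\<Sum>k\<in>Poly_Mapping.keys x.
      Poly_Mapping.single (\<one>\<^bsub>A\<^esub>, fst k # snd k) (Poly_Mapping.lookup x k))"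

definition kscale :: "('a, 'b) ring_scheme \<Rightarrow> 'a \<Rightarrow> 'a kformal \<Rightarrow> 'a kformal" where
  "kscale A c x = (\<Sum>k\<in>Poly_Mapping.keys x.
      Poly_Mapping.single (c \<otimes>\<^bsub>A\<^esub> fst k, snd k) (Poly_Mapping.lookup x k))"

end

theory Submission
  imports Defs
begin

text \<open>
  By additivity in every slot, a generator a_0 da_1 ... da_n of Omega^n_(R_m) is a sum of
  generators whose entries are monomials c t^j.  The Leibniz rule
  d(e t^(k+1)) = t^(k+1) de + (k+1) e t^k dt moves all powers of t out of the d-slots, at the
  cost of terms containing dt.  What is left is of three kinds: c t^j de_1 ... de_n with constant
  e_i, which is t^j (c de_1 ... de_n), hence in the image of theta if j > 0 and constant if j = 0;
  forms containing dt twice, which vanish; and, up to sign, c t^j dt de_1 ... de_(n-1), which is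
  d(u t^(j+1) de_1 ... de_(n-1)) - t^(j+1) du de_1 ... de_(n-1) for u = c/(j+1).  Only this last
  step needs R to contain Q.  The constant terms cancel because x vanishes at t = 0.
\<close>

lemma sum_single_lookup_eq_frag_extend:
  "(\<Sum>k\<in>Poly_Mapping.keys x. Poly_Mapping.single (g k) (Poly_Mapping.lookup x k))
    = frag_extend (\<lambda>k. frag_of (g k)) x"
  unfolding frag_extend_def
  by (intro sum.cong refl poly_mapping_eqI) (simp add: lookup_single when_def)

lemma kmap_eq_frag_extend: "kmap f x = frag_extend (\<lambda>k. frag_of (f (fst k), map f (snd k))) x"
  unfolding kmap_def by (rule sum_single_lookup_eq_frag_extend)

lemma kd_eq_frag_extend: "kd A x = frag_extend (\<lambda>k. frag_of (\<one>\<^bsub>A\<^esub>, fst k # snd k)) x"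
  unfolding kd_def by (rule sum_single_lookup_eq_frag_extend)

lemma kscale_eq_frag_extend: "kscale A c x = frag_extend (\<lambda>k. frag_of (c \<otimes>\<^bsub>A\<^esub> fst k, snd k)) x"
  unfolding kscale_def by (rule sum_single_lookup_eq_frag_extend)

lemma kmap_zero [simp]: "kmap f 0 = 0"
  and kmap_minus: "kmap f (- x) = - kmap f x"
  and kmap_diff: "kmap f (x - y) = kmap f x - kmap f y"
  and kmap_kgen [simp]: "kmap f (kgen a as) = kgen (f a) (map f as)"
  by (simp_all add: kmap_eq_frag_extend frag_extend_minus frag_extend_diff kgen_def)

lemma kd_zero [simp]: "kd A 0 = 0"
  and kd_diff: "kd A (x - y) = kd A x - kd A y"
  and kd_kgen [simp]: "kd A (kgen a as) = kgen \<one>\<^bsub>A\<^esub> (a # as)"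
  by (simp_all add: kd_eq_frag_extend frag_extend_diff kgen_def)

lemma kscale_zero [simp]: "kscale A c 0 = 0"
  and kscale_minus: "kscale A c (- x) = - kscale A c x"
  and kscale_diff: "kscale A c (x - y) = kscale A c x - kscale A c y"
  and kscale_kgen [simp]: "kscale A c (kgen a as) = kgen (c \<otimes>\<^bsub>A\<^esub> a) as"
  by (simp_all add: kscale_eq_frag_extend frag_extend_minus frag_extend_diff kgen_def)

lemma kform_iff_keys:
  "x \<in> kform A n \<longleftrightarrow>
    Poly_Mapping.keys x \<subseteq> {k. fst k \<in> carrier A \<and> set (snd k) \<subseteq> carrier A \<and> length (snd k) = n}"
  unfolding kform_def by auto

lemma kform_zero [simp]: "0 \<in> kform A n"
  by (simp add: kform_iff_keys)

lemma kform_diff: "x \<in> kform A n \<Longrightarrow> y \<in> kform A n \<Longrightarrow> x - y \<in> kform A n"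
  unfolding kform_iff_keys using keys_diff[of x y] by blast

lemma kform_minus: "x \<in> kform A n \<Longrightarrow> - x \<in> kform A n"
  by (simp add: kform_iff_keys)

lemma kform_kgen: "a \<in> carrier A \<Longrightarrow> set as \<subseteq> carrier A \<Longrightarrow> length as = n \<Longrightarrow> kgen a as \<in> kform A n"
  by (simp add: kform_iff_keys kgen_def)

lemma krel_minus: "x \<in> krel A n \<Longrightarrow> - x \<in> krel A n"
  using krel.diff[OF krel.zero, of x] by simp

lemma krel_add: "x \<in> krel A n \<Longrightarrow> y \<in> krel A n \<Longrightarrow> x + y \<in> krel A n"
  using krel.diff[OF _ krel_minus, of x A n y] by simp

lemma keq_0_iff: "keq A n x 0 \<longleftrightarrow> x \<in> krel A n"
  by (simp add: keq_def)

lemma keq_refl: "keq A n x x"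
  by (simp add: keq_def krel.zero)

lemma keq_sym: "keq A n x y \<Longrightarrow> keq A n y x"
  unfolding keq_def using krel_minus[of "x - y"] by simp

lemma keq_trans [trans]: "keq A n x y \<Longrightarrow> keq A n y z \<Longrightarrow> keq A n x z"
  unfolding keq_def using krel_add[of "x - y" A n "y - z"] by simp

lemma keq_add: "keq A n a b \<Longrightarrow> keq A n c d \<Longrightarrow> keq A n (a + c) (b + d)"
  unfolding keq_def using krel_add[of "a - b" A n "c - d"] by (simp add: algebra_simps)

lemma keq_minus: "keq A n a b \<Longrightarrow> keq A n (- a) (- b)"
  unfolding keq_def using krel_minus[of "a - b"] by (simp add: algebra_simps)

lemma keq_diff: "keq A n a b \<Longrightarrow> keq A n c d \<Longrightarrow> keq A n (a - c) (b - d)"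
  using keq_add[of A n a b "- c" "- d"] keq_minus[of A n c d] by simp

lemma keq_add_imp_keq_diff: "keq A n a (b + z) \<Longrightarrow> keq A n z (a - b)"
  unfolding keq_def using krel_minus[of "a - (b + z)"] by (simp add: algebra_simps)

lemma keq_add_krel_iff:
  assumes "u \<in> krel A n"
  shows "keq A n x (u + y) \<longleftrightarrow> keq A n x y"
proof -
  have "x - y = (x - (u + y)) + u" and "x - (u + y) = (x - y) + - u"
    by (simp_all add: algebra_simps)
  then show ?thesis
    unfolding keq_def using krel_add[OF _ assms] krel_add[OF _ krel_minus[OF assms]] by metis
qed

lemma kmap_krel:
  assumes closed: "\<And>a. a \<in> carrier A \<Longrightarrow> f a \<in> carrier B"
    and add: "\<And>a b. a \<in> carrier A \<Longrightarrow> b \<in> carrier A \<Longrightarrow> f (a \<oplus>\<^bsub>A\<^esub> b) = f a \<oplus>\<^bsub>B\<^esub> f b"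
    and mult: "\<And>a b. a \<in> carrier A \<Longrightarrow> b \<in> carrier A \<Longrightarrow> f (a \<otimes>\<^bsub>A\<^esub> b) = f a \<otimes>\<^bsub>B\<^esub> f b"
    and "x \<in> krel A n"
  shows "kmap f x \<in> krel B n"
proof -
  have map_closed: "f ` set xs \<subseteq> carrier B" if "set xs \<subseteq> carrier A" for xs
    using that closed by auto
  from \<open>x \<in> krel A n\<close> show ?thesis
  proof induction
    case zero
    show ?case by (simp add: krel.zero)
  next
    case (diff x y)
    then show ?case by (simp add: kmap_diff krel.diff)
  next
    case (add0 a b as)
    then show ?case
      using krel.add0[of "f a" B "f b" "map f as" n] by (simp add: kmap_diff add closed map_closed)
  next
    case (addd a b c xs ys)
    then show ?case
      using krel.addd[of "f a" B "f b" "f c" "map f xs" "map f ys" n]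
      by (simp add: kmap_diff add closed map_closed)
  next
    case (leibniz a b c xs ys)
    then show ?case
      using krel.leibniz[of "f a" B "f b" "f c" "map f xs" "map f ys" n]
      by (simp add: kmap_diff mult closed map_closed)
  next
    case (alt a b xs ys zs)
    then show ?case
      using krel.alt[of "f a" B "f b" "map f xs" "map f ys" "map f zs" n]
    by (simp add: closed map_closed)
  qed
qed

lemma keq_kgen_add_coeff:
  assumes "a \<in> carrier A" "b \<in> carrier A" "set as \<subseteq> carrier A" "length as = n"
  shows "keq A n (kgen (a \<oplus>\<^bsub>A\<^esub> b) as) (kgen a as + kgen b as)"
  using krel.add0[OF assms] unfolding keq_def by (simp add: diff_diff_eq)

lemma keq_kgen_add_slot:
  assumes "a \<in> carrier A" "b \<in> carrier A" "c \<in> carrier A"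
    "set xs \<subseteq> carrier A" "set ys \<subseteq> carrier A" "length xs + length ys + 1 = n"
  shows "keq A n (kgen a (xs @ (b \<oplus>\<^bsub>A\<^esub> c) # ys)) (kgen a (xs @ b # ys) + kgen a (xs @ c # ys))"
  using krel.addd[OF assms] unfolding keq_def by (simp add: diff_diff_eq)

lemma keq_kgen_mult_slot:
  assumes "a \<in> carrier A" "b \<in> carrier A" "c \<in> carrier A"
    "set xs \<subseteq> carrier A" "set ys \<subseteq> carrier A" "length xs + length ys + 1 = n"
  shows "keq A n (kgen a (xs @ (b \<otimes>\<^bsub>A\<^esub> c) # ys))
    (kgen (a \<otimes>\<^bsub>A\<^esub> b) (xs @ c # ys) + kgen (a \<otimes>\<^bsub>A\<^esub> c) (xs @ b # ys))"
  using krel.leibniz[OF assms] unfolding keq_def by (simp add: diff_diff_eq)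

lemma keq_self_add_imp_krel: "keq A n x (x + x) \<Longrightarrow> x \<in> krel A n"
  unfolding keq_def using krel_minus[of "x - (x + x)"] by simp

lemma krel_kgen_zero_coeff:
  assumes "abelian_monoid A" "set as \<subseteq> carrier A" "length as = n"
  shows "kgen \<zero>\<^bsub>A\<^esub> as \<in> krel A n"
  using keq_kgen_add_coeff[of "\<zero>\<^bsub>A\<^esub>" A "\<zero>\<^bsub>A\<^esub>" as n] assms
  by (intro keq_self_add_imp_krel) (simp add: abelian_monoid.zero_closed abelian_monoid.l_zero)

lemma krel_kgen_zero_slot:
  assumes "abelian_monoid A" "a \<in> carrier A"
    "set xs \<subseteq> carrier A" "set ys \<subseteq> carrier A" "length xs + length ys + 1 = n"
  shows "kgen a (xs @ \<zero>\<^bsub>A\<^esub> # ys) \<in> krel A n"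
  using keq_kgen_add_slot[of a A "\<zero>\<^bsub>A\<^esub>" "\<zero>\<^bsub>A\<^esub>" xs ys n] assms
  by (intro keq_self_add_imp_krel) (simp add: abelian_monoid.zero_closed abelian_monoid.l_zero)

text \<open>Antisymmetry: expand the vanishing form with the slot pair (b + c, b + c) by additivity.\<close>
lemma keq_kgen_swap:
  assumes "abelian_monoid A" "a \<in> carrier A" "b \<in> carrier A" "c \<in> carrier A"
    "set xs \<subseteq> carrier A" "set ys \<subseteq> carrier A" "length xs + length ys + 2 = n"
  shows "keq A n (kgen a (xs @ b # c # ys)) (- kgen a (xs @ c # b # ys))"
proof -
  let ?s = "b \<oplus>\<^bsub>A\<^esub> c" and ?g = "\<lambda>u v. kgen a (xs @ u # v # ys)"
  have s: "?s \<in> carrier A" using assms by (simp add: abelian_monoid.a_closed)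
  have diag: "?g u u \<in> krel A n" if "u \<in> carrier A" for u
    using assms that krel.alt[of a A u xs "[]" ys n] by simp
  have "keq A n 0 (?g ?s ?s)"
    using diag[OF s] by (simp add: keq_def krel_minus)
  also have "keq A n \<dots> (?g b ?s + ?g c ?s)"
    using assms s keq_kgen_add_slot[of a A b c xs "?s # ys" n] by simp
  also have "keq A n \<dots> ((?g b b + ?g b c) + (?g c b + ?g c c))"
    using assms keq_kgen_add_slot[of a A b c "xs @ [_]" ys n] by (intro keq_add) auto
  also have "keq A n \<dots> (?g b c + ?g c b)"
    unfolding keq_def using krel_add[OF diag[of b] diag[of c]] assms by (simp add: algebra_simps)
  finally have "- (?g b c + ?g c b) \<in> krel A n"
    by (simp add: keq_def)
  from krel_minus[OF this] show ?thesis
    by (simp add: keq_def add.commute)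
qed

lemma keq_kgen_move_to_front:
  assumes "abelian_monoid A" "a \<in> carrier A" "b \<in> carrier A"
    "set xs \<subseteq> carrier A" "set ys \<subseteq> carrier A" "length xs + length ys + 1 = n"
  shows "keq A n (kgen a (xs @ b # ys)) (frag_cmul ((- 1) ^ length xs) (kgen a (b # xs @ ys)))"
  using assms(4-6)
proof (induction xs arbitrary: ys rule: rev_induct)
  case Nil
  show ?case by (simp add: keq_refl)
next
  case (snoc x xs)
  have "keq A n (kgen a ((xs @ [x]) @ b # ys)) (- kgen a (xs @ b # x # ys))"
    using assms snoc.prems by (simp add: keq_kgen_swap)
  also have "keq A n \<dots> (- frag_cmul ((- 1) ^ length xs) (kgen a (b # xs @ x # ys)))"
    using snoc.prems by (intro keq_minus snoc.IH) auto
  finally show ?case by simp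
qed


locale trunc_poly = cring + fixes m :: nat
begin

abbreviation Rm where "Rm \<equiv> trunc_ring R m"

definition tmonom :: "nat \<Rightarrow> 'a \<Rightarrow> nat \<Rightarrow> 'a" where
  "tmonom j c = (\<lambda>i. if i = j \<and> j \<le> m then c else \<zero>)"

abbreviation tvar where "tvar \<equiv> tmonom 1 \<one>"

abbreviation tmonoms :: "(nat \<times> 'a) list \<Rightarrow> (nat \<Rightarrow> 'a) list" where
  "tmonoms ps \<equiv> map (\<lambda>(k, e). tmonom k e) ps"

lemma trunc_carrier_iff: "f \<in> carrier Rm \<longleftrightarrow> (\<forall>i. f i \<in> carrier R) \<and> (\<forall>i. m < i \<longrightarrow> f i = \<zero>)"
  by (simp add: trunc_ring_def)

lemma trunc_add: "f \<oplus>\<^bsub>Rm\<^esub> g = (\<lambda>k. f k \<oplus> g k)"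
  by (simp add: trunc_ring_def)

lemma trunc_mult: "f \<otimes>\<^bsub>Rm\<^esub> g = (\<lambda>k. if k \<le> m then (\<Oplus>i\<in>{..k}. f i \<otimes> g (k - i)) else \<zero>)"
  by (simp add: trunc_ring_def)

lemma trunc_one: "\<one>\<^bsub>Rm\<^esub> = tmonom 0 \<one>"
  by (auto simp: trunc_ring_def tmonom_def)

lemma trunc_zero: "\<zero>\<^bsub>Rm\<^esub> = (\<lambda>k. \<zero>)"
  by (simp add: trunc_ring_def)

lemma abelian_monoid_trunc: "abelian_monoid Rm"
  by (rule abelian_monoidI) (auto simp: trunc_carrier_iff trunc_add trunc_zero fun_eq_iff a_ac)

lemma tmonom_closed [simp]: "c \<in> carrier R \<Longrightarrow> tmonom j c \<in> carrier Rm"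
  by (auto simp: trunc_carrier_iff tmonom_def)

lemma tmonom_image_closed [simp]: "set es \<subseteq> carrier R \<Longrightarrow> tmonom j ` set es \<subseteq> carrier Rm"
  by auto

lemma tmonom_pairs_closed [simp]:
  "snd ` set ps \<subseteq> carrier R \<Longrightarrow> (\<lambda>(k, e). tmonom k e) ` set ps \<subseteq> carrier Rm"
  by force

lemma tmonom_add: "a \<in> carrier R \<Longrightarrow> b \<in> carrier R \<Longrightarrow> tmonom j a \<oplus>\<^bsub>Rm\<^esub> tmonom j b = tmonom j (a \<oplus> b)"
  by (auto simp: trunc_add tmonom_def)

lemma tmonom_above: "m < j \<Longrightarrow> tmonom j c = \<zero>\<^bsub>Rm\<^esub>"
  by (auto simp: trunc_zero tmonom_def)

lemma tmonom_mult:
  assumes "a \<in> carrier R" "b \<in> carrier R"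
  shows "tmonom j a \<otimes>\<^bsub>Rm\<^esub> tmonom k b = tmonom (j + k) (a \<otimes> b)"
proof
  fix l
  show "(tmonom j a \<otimes>\<^bsub>Rm\<^esub> tmonom k b) l = tmonom (j + k) (a \<otimes> b) l"
  proof (cases "l \<le> m")
    case True
    have "(\<Oplus>i\<in>{..l}. tmonom j a i \<otimes> tmonom k b (l - i))
        = (\<Oplus>i\<in>{..l}. if i = j then tmonom (j + k) (a \<otimes> b) l else \<zero>)"
      using assms True by (intro finsum_cong') (auto simp: tmonom_def)
    also have "\<dots> = tmonom (j + k) (a \<otimes> b) l"
    proof (cases "j \<le> l")
      case True
      then show ?thesis
        using assms by (subst add.finprod_singleton_swap) (auto simp: tmonom_def)
    next
      case False
      then show ?thesis
        by (subst finsum_cong'[where g = "\<lambda>_. \<zero>"]) (auto simp: tmonom_def)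
    qed
    finally show ?thesis
      using True by (simp add: trunc_mult)
  qed (auto simp: trunc_mult tmonom_def)
qed

lemma trunc_incl_eq_tmonom: "trunc_incl R = tmonom 0"
  by (auto simp: trunc_incl_def tmonom_def fun_eq_iff)

lemma trunc_tpow_eq_tmonom: "i \<le> m \<Longrightarrow> trunc_tpow R i = tmonom i \<one>"
  by (auto simp: trunc_tpow_def tmonom_def)

lemma trunc_eval0_tmonom [simp]: "trunc_eval0 (tmonom j c) = (if j = 0 then c else \<zero>)"
  by (simp add: tmonom_def trunc_eval0_def)

lemma krel_kmap_trunc_eval0: "x \<in> krel Rm n \<Longrightarrow> kmap trunc_eval0 x \<in> krel R n"
  by (rule kmap_krel) (auto simp: trunc_eval0_def trunc_carrier_iff trunc_add trunc_mult)

lemma krel_kmap_trunc_incl: "x \<in> krel R n \<Longrightarrow> kmap (trunc_incl R) x \<in> krel Rm n"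
  by (rule kmap_krel) (auto simp: trunc_incl_eq_tmonom tmonom_add tmonom_mult)

lemma keq_expand_tmonoms:
  assumes additive: "\<And>a b. a \<in> carrier Rm \<Longrightarrow> b \<in> carrier Rm \<Longrightarrow>
      keq Rm n (\<phi> (a \<oplus>\<^bsub>Rm\<^esub> b)) (\<phi> a + \<phi> b)"
    and f: "f \<in> carrier Rm"
  shows "keq Rm n (\<phi> f) (\<Sum>k\<le>m. \<phi> (tmonom k (f k)))"
proof -
  let ?part = "\<lambda>N i. if i < N then f i else \<zero>"
  have fR: "f i \<in> carrier R" for i
    using f by (simp add: trunc_carrier_iff)
  have part_closed: "?part N \<in> carrier Rm" for N
    using f by (auto simp: trunc_carrier_iff)
  have "\<phi> \<zero>\<^bsub>Rm\<^esub> \<in> krel Rm n"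
    using additive[of "\<zero>\<^bsub>Rm\<^esub>" "\<zero>\<^bsub>Rm\<^esub>"] abelian_monoid_trunc
    by (intro keq_self_add_imp_krel) (simp add: abelian_monoid.zero_closed abelian_monoid.l_zero)
  then have "keq Rm n (\<phi> (?part N)) (\<Sum>k<N. \<phi> (tmonom k (f k)))" if "N \<le> Suc m" for N
    using that
  proof (induction N)
    case 0
    then show ?case by (simp add: keq_0_iff trunc_zero)
  next
    case (Suc N)
    have "?part (Suc N) = ?part N \<oplus>\<^bsub>Rm\<^esub> tmonom N (f N)"
      using Suc.prems fR by (auto simp: trunc_add tmonom_def)
    then have "keq Rm n (\<phi> (?part (Suc N))) (\<phi> (?part N) + \<phi> (tmonom N (f N)))"
      using part_closed fR by (simp add: additive)
    also have "keq Rm n \<dots> ((\<Sum>k<N. \<phi> (tmonom k (f k))) + \<phi> (tmonom N (f N)))"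
      using Suc by (intro keq_add keq_refl) simp_all
    finally show ?case by simp
  qed
  moreover have "?part (Suc m) = f"
    using f by (auto simp: trunc_carrier_iff)
  ultimately show ?thesis
    using lessThan_Suc_atMost[of m] by force
qed

lemma keq_kgen_expand_coeff:
  "a \<in> carrier Rm \<Longrightarrow> set as \<subseteq> carrier Rm \<Longrightarrow> length as = n \<Longrightarrow>
    keq Rm n (kgen a as) (\<Sum>k\<le>m. kgen (tmonom k (a k)) as)"
  by (rule keq_expand_tmonoms) (simp_all add: keq_kgen_add_coeff)

lemma keq_kgen_expand_slot:
  "b \<in> carrier Rm \<Longrightarrow> a \<in> carrier Rm \<Longrightarrow> set xs \<subseteq> carrier Rm \<Longrightarrow> set ys \<subseteq> carrier Rm \<Longrightarrow>
    length xs + length ys + 1 = n \<Longrightarrow>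
    keq Rm n (kgen a (xs @ b # ys)) (\<Sum>k\<le>m. kgen a (xs @ tmonom k (b k) # ys))"
  by (rule keq_expand_tmonoms[where \<phi> = "\<lambda>b. kgen a (xs @ b # ys)"])
    (simp_all add: keq_kgen_add_slot)

lemma keq_kgen_tpow_slot:
  assumes "c \<in> carrier R" "set xs \<subseteq> carrier Rm" "set ys \<subseteq> carrier Rm"
    "length xs + length ys + 1 = n"
  shows "keq Rm n (kgen (tmonom j c) (xs @ tmonom (Suc k) \<one> # ys))
    (kgen (tmonom (j + k) ([Suc k] \<cdot> c)) (xs @ tvar # ys))"
  using assms(1)
proof (induction k arbitrary: j c)
  case 0
  then show ?case by (simp add: keq_refl)
next
  case (Suc k)
  let ?g = "\<lambda>a. kgen a (xs @ tvar # ys)" and ?i = "j + Suc k"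
  have t: "tmonom (Suc (Suc k)) \<one> = tmonom (Suc k) \<one> \<otimes>\<^bsub>Rm\<^esub> tvar"
    by (simp add: tmonom_mult)
  have "keq Rm n (kgen (tmonom j c) (xs @ tmonom (Suc (Suc k)) \<one> # ys))
      (?g (tmonom j c \<otimes>\<^bsub>Rm\<^esub> tmonom (Suc k) \<one>)
        + kgen (tmonom j c \<otimes>\<^bsub>Rm\<^esub> tvar) (xs @ tmonom (Suc k) \<one> # ys))"
    unfolding t using Suc.prems assms by (intro keq_kgen_mult_slot) auto
  also have "\<dots> = ?g (tmonom ?i c) + kgen (tmonom (Suc j) c) (xs @ tmonom (Suc k) \<one> # ys)"
    using Suc.prems by (simp add: tmonom_mult)
  also have "keq Rm n \<dots> (?g (tmonom ?i c) + ?g (tmonom ?i ([Suc k] \<cdot> c)))"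
    using Suc.IH[of c "Suc j"] Suc.prems by (intro keq_add keq_refl) simp
  also have "keq Rm n \<dots> (?g (tmonom ?i c \<oplus>\<^bsub>Rm\<^esub> tmonom ?i ([Suc k] \<cdot> c)))"
    using Suc.prems assms by (intro keq_kgen_add_coeff[THEN keq_sym]) auto
  also have "tmonom ?i c \<oplus>\<^bsub>Rm\<^esub> tmonom ?i ([Suc k] \<cdot> c) = tmonom ?i ([Suc (Suc k)] \<cdot> c)"
    using Suc.prems by (simp add: tmonom_add add.nat_pow_Suc2 del: add.nat_pow_Suc)
  finally show ?case
    by simp
qed

lemma keq_kgen_tmonom_slot:
  assumes "c \<in> carrier R" "e \<in> carrier R"
    "set xs \<subseteq> carrier Rm" "set ys \<subseteq> carrier Rm" "length xs + length ys + 1 = n"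
  shows "keq Rm n (kgen (tmonom j c) (xs @ tmonom (Suc k) e # ys))
    (kgen (tmonom (j + Suc k) c) (xs @ tmonom 0 e # ys)
      + kgen (tmonom (j + k) ([Suc k] \<cdot> (c \<otimes> e))) (xs @ tvar # ys))"
proof -
  have "keq Rm n (kgen (tmonom j c) (xs @ (tmonom (Suc k) \<one> \<otimes>\<^bsub>Rm\<^esub> tmonom 0 e) # ys))
      (kgen (tmonom (j + Suc k) c) (xs @ tmonom 0 e # ys)
        + kgen (tmonom j (c \<otimes> e)) (xs @ tmonom (Suc k) \<one> # ys))"
    using keq_kgen_mult_slot[of "tmonom j c" Rm "tmonom (Suc k) \<one>" "tmonom 0 e" xs ys n] assms
    by (simp add: tmonom_mult)
  also have "keq Rm n \<dots> (kgen (tmonom (j + Suc k) c) (xs @ tmonom 0 e # ys)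
      + kgen (tmonom (j + k) ([Suc k] \<cdot> (c \<otimes> e))) (xs @ tvar # ys))"
    using assms by (intro keq_add keq_refl keq_kgen_tpow_slot) simp_all
  finally show ?thesis
    using assms by (simp add: tmonom_mult)
qed

definition theta :: "(nat \<Rightarrow> 'a kformal) \<Rightarrow> (nat \<Rightarrow> 'a) kformal" where
  "theta w = (\<Sum>i\<in>{1..m}. kscale Rm (trunc_tpow R i) (kmap (trunc_incl R) (w i)))"

lemma theta_zero [simp]: "theta (\<lambda>i. 0) = 0"
  by (simp add: theta_def)

lemma theta_diff: "theta (\<lambda>i. v i - w i) = theta v - theta w"
  by (simp add: theta_def kmap_diff kscale_diff sum_subtractf)

lemma theta_minus: "theta (\<lambda>i. - w i) = - theta w"
  by (simp add: theta_def kmap_minus kscale_minus sum_negf)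

lemma keq_theta_single_kgen:
  assumes "0 < k" "e \<in> carrier R" "set es \<subseteq> carrier R" "length es = n"
  shows "keq Rm n (theta (\<lambda>i. if i = k then kgen e es else 0))
    (kgen (tmonom k e) (map (tmonom 0) es))"
proof (cases "k \<le> m")
  case True
  then have "theta (\<lambda>i. if i = k then kgen e es else 0)
      = kscale Rm (trunc_tpow R k) (kmap (trunc_incl R) (kgen e es))"
    unfolding theta_def using assms(1)
    by (simp add: if_distrib[of "kmap _"] if_distrib[of "kscale _ _"] cong: if_cong)
  then show ?thesis
    using True assms by (simp add: trunc_tpow_eq_tmonom trunc_incl_eq_tmonom tmonom_mult keq_refl)
next
  case False
  then have "theta (\<lambda>i. if i = k then kgen e es else 0) = 0"
    unfolding theta_def by (intro sum.neutral) auto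
  moreover have "kgen (tmonom k e) (map (tmonom 0) es) \<in> krel Rm n"
    using False assms krel_kgen_zero_coeff[OF abelian_monoid_trunc, of "map (tmonom 0) es" n]
    by (auto simp: tmonom_above)
  ultimately show ?thesis
    by (simp add: keq_def krel_minus)
qed

abbreviation const_part :: "(nat \<Rightarrow> 'a) kformal \<Rightarrow> (nat \<Rightarrow> 'a) kformal" where
  "const_part z \<equiv> kmap (trunc_incl R) (kmap trunc_eval0 z)"

text \<open>The constant part is carried along so that constant generators c de_1 ... de_n qualify;
  for the form x of the theorem it vanishes by hypothesis.\<close>
definition decomposable :: "nat \<Rightarrow> (nat \<Rightarrow> 'a) kformal \<Rightarrow> bool" where
  "decomposable n z \<longleftrightarrow> (\<exists>y w. y \<in> kform Rm (n - 1) \<and> (n = 0 \<longrightarrow> y = 0)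
      \<and> keq R (n - 1) (kmap trunc_eval0 y) 0 \<and> (\<forall>i. w i \<in> kform R n)
      \<and> keq Rm n z (const_part z + kd Rm y + theta w))"

lemma decomposableI_eval0_krel:
  assumes "y \<in> kform Rm (n - 1)" "n = 0 \<longrightarrow> y = 0" "kmap trunc_eval0 y \<in> krel R (n - 1)"
    "\<And>i. w i \<in> kform R n" "kmap trunc_eval0 z \<in> krel R n" "keq Rm n z (kd Rm y + theta w)"
  shows "decomposable n z"
  unfolding decomposable_def
proof (intro exI conjI allI)
  show "keq Rm n z (const_part z + kd Rm y + theta w)"
    using assms(6) by (simp add: add.assoc keq_add_krel_iff krel_kmap_trunc_incl[OF assms(5)])
qed (use assms in \<open>simp_all add: keq_0_iff\<close>)

lemma decomposable_zero: "decomposable n 0"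
  unfolding decomposable_def by (intro exI[of _ 0] exI[of _ "\<lambda>i. 0"]) (simp add: keq_refl)

lemma decomposable_diff:
  assumes "decomposable n z" "decomposable n z'"
  shows "decomposable n (z - z')"
proof -
  obtain y w where "y \<in> kform Rm (n - 1)" "n = 0 \<longrightarrow> y = 0"
      "keq R (n - 1) (kmap trunc_eval0 y) 0" "\<forall>i. w i \<in> kform R n"
      "keq Rm n z (const_part z + kd Rm y + theta w)"
    using assms(1) unfolding decomposable_def by blast
  moreover obtain y' w' where "y' \<in> kform Rm (n - 1)" "n = 0 \<longrightarrow> y' = 0"
      "keq R (n - 1) (kmap trunc_eval0 y') 0" "\<forall>i. w' i \<in> kform R n"
      "keq Rm n z' (const_part z' + kd Rm y' + theta w')"
    using assms(2) unfolding decomposable_def by blast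
  ultimately show ?thesis
    unfolding decomposable_def
    by (intro exI[of _ "y - y'"] exI[of _ "\<lambda>i. w i - w' i"])
      (auto simp: kform_diff kmap_diff kd_diff theta_diff algebra_simps dest: keq_diff)
qed

lemma decomposable_minus: "decomposable n z \<Longrightarrow> decomposable n (- z)"
  using decomposable_diff[OF decomposable_zero, of n z] by simp

lemma decomposable_add: "decomposable n z \<Longrightarrow> decomposable n z' \<Longrightarrow> decomposable n (z + z')"
  using decomposable_diff[OF _ decomposable_minus, of n z z'] by simp

lemma decomposable_keq:
  assumes "keq Rm n z z'" "decomposable n z'"
  shows "decomposable n z"
proof -
  obtain y w where "y \<in> kform Rm (n - 1)" "n = 0 \<longrightarrow> y = 0"
      "keq R (n - 1) (kmap trunc_eval0 y) 0" "\<forall>i. w i \<in> kform R n"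
      and z': "keq Rm n z' (const_part z' + kd Rm y + theta w)"
    using assms(2) unfolding decomposable_def by blast
  moreover have "keq Rm n (const_part z') (const_part z)"
    using krel_kmap_trunc_incl[OF krel_kmap_trunc_eval0[of "z' - z" n]] keq_sym[OF assms(1)]
    by (simp add: keq_def kmap_diff)
  then have "keq Rm n z (const_part z + kd Rm y + theta w)"
    using keq_trans[OF assms(1) z'] by (meson keq_add keq_refl keq_trans)
  ultimately show ?thesis
    unfolding decomposable_def by blast
qed

lemma decomposable_sum:
  "finite I \<Longrightarrow> (\<And>i. i \<in> I \<Longrightarrow> decomposable n (g i)) \<Longrightarrow> decomposable n (\<Sum>i\<in>I. g i)"
  by (induction I rule: finite_induct) (auto intro: decomposable_add decomposable_zero)

lemma decomposable_sign: "decomposable n z \<Longrightarrow> decomposable n (frag_cmul ((- 1) ^ k) z)"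
  by (cases "even k") (simp_all add: decomposable_minus)

lemma keq_kgen_tvar_absorb_tpows:
  assumes "c \<in> carrier R" "set es \<subseteq> carrier R" "set (map snd ps) \<subseteq> carrier R"
    "length es + length ps + 1 = n"
  shows "keq Rm n (kgen (tmonom j c) (tvar # map (tmonom 0) es @ tmonoms ps))
    (kgen (tmonom (j + sum_list (map fst ps)) c) (tvar # map (tmonom 0) (es @ map snd ps)))"
  using assms(2-4)
proof (induction ps arbitrary: j es)
  case Nil
  show ?case by (simp add: keq_refl)
next
  case (Cons p ps)
  obtain k e where p: "p = (k, e)" by fastforce
  have e: "e \<in> carrier R" using Cons.prems p by simp
  let ?d = "sum_list (map fst ps)" and ?flat = "tvar # map (tmonom 0) (es @ e # map snd ps)"
  have IH: "keq Rm n (kgen (tmonom j' c) (tvar # map (tmonom 0) (es @ [e]) @ tmonoms ps))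
      (kgen (tmonom (j' + ?d) c) ?flat)" for j'
    using Cons.IH[of "es @ [e]" j'] Cons.prems e p by simp
  show ?case
  proof (cases k)
    case 0
    then show ?thesis using IH[of j] p by simp
  next
    case (Suc k')
    let ?pre = "tvar # map (tmonom 0) es" and ?post = "tmonoms ps"
    have "keq Rm n (kgen (tmonom j c) (?pre @ tmonom (Suc k') e # ?post))
        (kgen (tmonom (j + Suc k') c) (?pre @ tmonom 0 e # ?post)
          + kgen (tmonom (j + k') ([Suc k'] \<cdot> (c \<otimes> e))) (?pre @ tvar # ?post))"
      using assms(1) e Cons.prems p by (intro keq_kgen_tmonom_slot) auto
    also have "keq Rm n \<dots> (kgen (tmonom (j + Suc k' + ?d) c) ?flat + 0)"
    proof (intro keq_add)
      show "keq Rm n (kgen (tmonom (j + Suc k') c) (?pre @ tmonom 0 e # ?post))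
          (kgen (tmonom (j + Suc k' + ?d) c) ?flat)"
        using IH[of "j + Suc k'"] by simp
      show "keq Rm n (kgen (tmonom (j + k') ([Suc k'] \<cdot> (c \<otimes> e))) (?pre @ tvar # ?post)) 0"
        unfolding keq_0_iff
        using krel.alt[of _ Rm tvar "[]" "map (tmonom 0) es" ?post n] assms(1) e Cons.prems p
        by auto
    qed
    finally show ?thesis
      using p Suc by (simp add: ac_simps)
  qed
qed

lemma decomposable_kgen_tvar_const:
  assumes "contains_rationals R" "c \<in> carrier R" "set es \<subseteq> carrier R" "length es + 1 = n"
  shows "decomposable n (kgen (tmonom j c) (tvar # map (tmonom 0) es))"
proof -
  let ?N = "[Suc j] \<cdot> \<one>"
  have N: "?N \<in> Units R"
    using assms(1) by (simp add: contains_rationals_def del: add.nat_pow_Suc)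
  define u where "u = inv ?N \<otimes> c"
  have u: "u \<in> carrier R"
    using N assms(2) by (simp add: u_def)
  have "[Suc j] \<cdot> u = ?N \<otimes> u"
    using u by (simp add: add_pow_ldistr del: add.nat_pow_Suc)
  also have "\<dots> = c"
    using N assms(2) by (simp add: u_def m_assoc[symmetric] del: add.nat_pow_Suc)
  finally have Nu: "[Suc j] \<cdot> (\<one> \<otimes> u) = c"
    using u by simp
  define y where "y = kgen (tmonom (Suc j) u) (map (tmonom 0) es)"
  define w where "w = (\<lambda>i. if i = Suc j then kgen \<one> (u # es) else 0)"
  let ?z = "kgen (tmonom j c) (tvar # map (tmonom 0) es)"
  have "keq Rm n (kd Rm y) (kgen (tmonom (Suc j) \<one>) (map (tmonom 0) (u # es)) + ?z)"
    using keq_kgen_tmonom_slot[of \<one> u "[]" "map (tmonom 0) es" n 0 j] u assms(3,4) Nu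
    by (simp add: y_def trunc_one)
  moreover have "keq Rm n (theta w) (kgen (tmonom (Suc j) \<one>) (map (tmonom 0) (u # es)))"
    unfolding w_def using u assms(3,4) by (intro keq_theta_single_kgen) auto
  ultimately have z: "keq Rm n ?z (kd Rm y + theta (\<lambda>i. - w i))"
    unfolding theta_minus using keq_trans[OF keq_add_imp_keq_diff keq_diff[OF keq_refl keq_sym]]
    by simp
  show ?thesis
  proof (rule decomposableI_eval0_krel)
    show "y \<in> kform Rm (n - 1)"
      using u assms(3,4) by (simp add: y_def kform_kgen)
    show "kmap trunc_eval0 y \<in> krel R (n - 1)"
      using krel_kgen_zero_coeff[of R "map trunc_eval0 (map (tmonom 0) es)" "n - 1"] assms(3,4)
      by (simp add: y_def o_def abelian_monoid_axioms)
    show "- w i \<in> kform R n" for i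
      using u assms(2-4) by (auto simp: w_def intro!: kform_minus kform_kgen)
    show "kmap trunc_eval0 ?z \<in> krel R n"
      using krel_kgen_zero_slot[of R "trunc_eval0 (tmonom j c)" "[]"] assms(2-4)
      by (simp add: o_def abelian_monoid_axioms)
  qed (use assms(4) z in simp_all)
qed

lemma decomposable_kgen_const_slots:
  assumes "c \<in> carrier R" "set es \<subseteq> carrier R" "length es = n"
  shows "decomposable n (kgen (tmonom j c) (map (tmonom 0) es))"
proof (cases "j = 0")
  case True
  then show ?thesis
    unfolding decomposable_def
    by (intro exI[of _ 0] exI[of _ "\<lambda>i. 0"]) (simp add: trunc_incl_eq_tmonom o_def keq_refl)
next
  case False
  show ?thesis
  proof (rule decomposableI_eval0_krel[where y = 0])
    show "kmap trunc_eval0 (kgen (tmonom j c) (map (tmonom 0) es)) \<in> krel R n"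
      using False assms krel_kgen_zero_coeff[OF abelian_monoid_axioms, of es n] by (simp add: o_def)
    show "keq Rm n (kgen (tmonom j c) (map (tmonom 0) es))
        (kd Rm 0 + theta (\<lambda>i. if i = j then kgen c es else 0))"
      using keq_theta_single_kgen[THEN keq_sym, of j c es n] False assms by simp
  qed (use assms in \<open>simp_all add: krel.zero kform_kgen\<close>)
qed

lemma decomposable_kgen_tmonom_slots:
  assumes "contains_rationals R" "c \<in> carrier R" "set es \<subseteq> carrier R"
    "set (map snd ps) \<subseteq> carrier R" "length es + length ps = n"
  shows "decomposable n (kgen (tmonom j c) (map (tmonom 0) es @ tmonoms ps))"
  using assms(2-5)
proof (induction ps arbitrary: j c es)
  case Nil
  then show ?case by (simp add: decomposable_kgen_const_slots)
next
  case (Cons p ps)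
  obtain k e where p: "p = (k, e)" by fastforce
  have e: "e \<in> carrier R" using Cons.prems p by simp
  have IH: "decomposable n (kgen (tmonom j' c) (map (tmonom 0) (es @ [e]) @ tmonoms ps))" for j'
    using Cons.IH[of c "es @ [e]" j'] Cons.prems e p by simp
  show ?case
  proof (cases k)
    case 0
    then show ?thesis using IH[of j] p by simp
  next
    case (Suc k')
    let ?pre = "map (tmonom 0) es" and ?post = "tmonoms ps"
      and ?c' = "[Suc k'] \<cdot> (c \<otimes> e)"
    have c': "?c' \<in> carrier R" using Cons.prems e by simp
    have split: "keq Rm n (kgen (tmonom j c) (?pre @ tmonom (Suc k') e # ?post))
        (kgen (tmonom (j + Suc k') c) (?pre @ tmonom 0 e # ?post)
          + kgen (tmonom (j + k') ?c') (?pre @ tvar # ?post))"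
      using e Cons.prems p by (intro keq_kgen_tmonom_slot) auto
    have "decomposable n (kgen (tmonom (j + Suc k') c) (?pre @ tmonom 0 e # ?post))"
      using IH[of "j + Suc k'"] by simp
    moreover have "decomposable n (kgen (tmonom (j + k') ?c') (?pre @ tvar # ?post))"
    proof -
      let ?a = "tmonom (j + k') ?c'" and ?d = "sum_list (map fst ps)"
      have "keq Rm n (kgen ?a (?pre @ tvar # ?post))
          (frag_cmul ((- 1) ^ length es) (kgen ?a (tvar # ?pre @ ?post)))"
        using keq_kgen_move_to_front[OF abelian_monoid_trunc, of ?a tvar ?pre ?post n]
          c' Cons.prems p
        by simp
      moreover have "keq Rm n (kgen ?a (tvar # ?pre @ ?post))
          (kgen (tmonom (j + k' + ?d) ?c') (tvar # map (tmonom 0) (es @ map snd ps)))"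
        using c' Cons.prems p by (intro keq_kgen_tvar_absorb_tpows) auto
      moreover have
        "decomposable n (kgen (tmonom (j + k' + ?d) ?c') (tvar # map (tmonom 0) (es @ map snd ps)))"
        using c' Cons.prems p by (intro decomposable_kgen_tvar_const assms(1)) auto
      ultimately show ?thesis
        by (metis decomposable_keq decomposable_sign)
    qed
    ultimately show ?thesis
      using decomposable_keq[OF split decomposable_add] p Suc by simp
  qed
qed

lemma decomposable_kgen_tmonom_coeff:
  assumes "contains_rationals R" "c \<in> carrier R" "set (map snd ps) \<subseteq> carrier R"
    "set ys \<subseteq> carrier Rm" "length ps + length ys = n"
  shows "decomposable n (kgen (tmonom j c) (tmonoms ps @ ys))"
  using assms(3-5)
proof (induction ys arbitrary: ps)
  case Nil
  then show ?case
    using decomposable_kgen_tmonom_slots[OF assms(1,2), of "[]" ps n j] by simp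
next
  case (Cons y ys)
  have y: "y k \<in> carrier R" for k
    using Cons.prems by (simp add: trunc_carrier_iff)
  have "keq Rm n (kgen (tmonom j c) (tmonoms ps @ y # ys))
      (\<Sum>k\<le>m. kgen (tmonom j c) (tmonoms ps @ tmonom k (y k) # ys))"
    using assms(2) Cons.prems by (intro keq_kgen_expand_slot) auto
  moreover have "decomposable n (\<Sum>k\<le>m. kgen (tmonom j c) (tmonoms ps @ tmonom k (y k) # ys))"
    using Cons.IH[of "ps @ [(k, y k)]" for k] Cons.prems y by (intro decomposable_sum) simp_all
  ultimately show ?case
    by (rule decomposable_keq)
qed

lemma decomposable_kgen:
  assumes "contains_rationals R" "a \<in> carrier Rm" "set as \<subseteq> carrier Rm" "length as = n"
  shows "decomposable n (kgen a as)"
proof (rule decomposable_keq)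
  show "keq Rm n (kgen a as) (\<Sum>k\<le>m. kgen (tmonom k (a k)) as)"
    using assms by (intro keq_kgen_expand_coeff)
  show "decomposable n (\<Sum>k\<le>m. kgen (tmonom k (a k)) as)"
    using decomposable_kgen_tmonom_coeff[OF assms(1), of _ "[]" as n] assms
    by (intro decomposable_sum) (simp_all add: trunc_carrier_iff)
qed

lemma decomposable_kform:
  assumes "contains_rationals R" "x \<in> kform Rm n"
  shows "decomposable n x"
  using assms(2) unfolding kform_iff_keys
proof (induction x rule: frag_induction)
  case zero
  show ?case by (rule decomposable_zero)
next
  case (one k)
  then show ?case
    using decomposable_kgen[OF assms(1), of "fst k" "snd k" n] by (simp add: kgen_def)
next
  case (diff a b)
  then show ?case by (rule decomposable_diff)
qed

end

theorem lemma8p3: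
  fixes R :: "('a, 'b) ring_scheme" and m n :: nat and x :: "(nat \<Rightarrow> 'a) kformal"
  assumes "cring R" and "semilocal R" and "contains_rationals R" and "1 \<le> m"
    and "x \<in> kform (trunc_ring R m) n"
    and "keq R n (kmap trunc_eval0 x) 0"
  shows "\<exists>y w. y \<in> kform (trunc_ring R m) (n - 1)
      \<and> (n = 0 \<longrightarrow> y = 0)
      \<and> keq R (n - 1) (kmap trunc_eval0 y) 0
      \<and> (\<forall>i. w i \<in> kform R n)
      \<and> keq (trunc_ring R m) n x
           (kd (trunc_ring R m) y
            + (\<Sum>i\<in>{1..m}. kscale (trunc_ring R m) (trunc_tpow R i) (kmap (trunc_incl R) (w i))))"
proof -
  interpret trunc_poly R m by (rule trunc_poly.intro[OF assms(1)])
  obtain y w where y: "y \<in> kform Rm (n - 1)" "n = 0 \<longrightarrow> y = 0"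
      "keq R (n - 1) (kmap trunc_eval0 y) 0"
    and w: "\<forall>i. w i \<in> kform R n" and x: "keq Rm n x (const_part x + kd Rm y + theta w)"
    using decomposable_kform[OF assms(3,5)] unfolding decomposable_def by blast
  have "const_part x \<in> krel Rm n"
    using assms(6) by (intro krel_kmap_trunc_incl) (simp add: keq_0_iff)
  then have "keq Rm n x (kd Rm y + theta w)"
    using x by (simp add: add.assoc keq_add_krel_iff)
  with y w show ?thesis
    unfolding theta_def by blast
qed

end
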